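(* Let $N\ge1$, $n\ge1$, let $P(z_1,\dots,z_n)$ be a symmetric Laurent polynomial, regarded as a multiplication operator on $F_{N,n}$, and let $\omega_*$ be as in the context. Then for every $f\in F_{N,n}$, $$\omega_*(Pf)=P(x_1^{-N},\dots,x_n^{-N})\,\omega_*(f).$$
   Context: For $k\in\mathbb Z$, $\underline{k}\in\{1,\dots,N\}$, $\overline{k}\in\mathbb Z$ unique with $k=\underline{k}-N\overline{k}$. $V=\mathbb C^N$ with basis $v_1,\dots,v_N$. On $\mathbb C[z_1^{\pm1},\dots,z_n^{\pm1}]\otimes V^{\otimes n}$, $K_{ij}$ swaps $z_i,z_j$ and $P_{ij}$ swaps the $i$-th and $j$-th factors of $V^{\otimes n}$; $F_{N,n}=\{f:K_{ij}f=-P_{ij}f\ \forall i\neq j\}$. For $k\in\mathbb Z^n$, $\hat u_k=\sum_{w\in S_n}\mathrm{sign}(w)z_1^{\overline{k_{w(1)}}}\cdots z_n^{\overline{k_{w(n)}}}\otimes v_{\underline{k_{w(1)}}}\otimes\cdots\otimes v_{\underline{k_{w(n)}}}$; the $\hat u_k$ with $k_1>\dots>k_n$ form a basis of $F_{N,n}$. For $k\in\mathbb Z^n$, $\hat a_k=\sum_{w\in S_n}\mathrm{sign}(w)x_{w(1)}^{k_1}\cdots x_{w(n)}^{k_n}$, a skew-symmetric Laurent polynomial in $x_1,\dots,x_n$. $\omega_*$ is the linear isomorphism from $F_{N,n}$ onto the space of skew-symmetric Laurent polynomials in $x_1,\dots,x_n$ with $\omega_*(\hat u_k)=\hat a_k$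 for $k_1>\dots>k_n$. *)

theory Defs
  imports Complex_Main "HOL-Combinatorics.Permutations"
begin

text \<open>Variables z_1..z_n (resp. x_1..x_n) and tensor factors are indexed by
list positions 0..n-1. A Laurent monomial is an exponent list (int list of length n).
An element of C[z^{+-1}] tensor V^{tensor n} is a finitely supported function on pairs
(exponent list e, index list v) with v a list of n indices in 1..N, standing for
z^e tensor v_{v_1} tensor ... tensor v_{v_n}.\<close>

definition lswap :: "nat \<Rightarrow> nat \<Rightarrow> 'a list \<Rightarrow> 'a list" where
  "lswap i j xs = xs[i := xs ! j, j := xs ! i]"

definition laurent :: "nat \<Rightarrow> (int list \<Rightarrow> complex) set" where
  "laurent n = {P. finite {e. P e \<noteq> 0} \<and> (\<forall>e. P e \<noteq> 0 \<longrightarrow> length e = n)}"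

definition symmetric_laurent :: "nat \<Rightarrow> (int list \<Rightarrow> complex) \<Rightarrow> bool" where
  "symmetric_laurent n P \<longleftrightarrow> P \<in> laurent n \<and>
     (\<forall>i j e. i < n \<longrightarrow> j < n \<longrightarrow> P (lswap i j e) = P e)"

definition tensor_space :: "nat \<Rightarrow> nat \<Rightarrow> (int list \<times> nat list \<Rightarrow> complex) set" where
  "tensor_space N n = {f. finite {x. f x \<noteq> 0} \<and>
     (\<forall>e v. f (e, v) \<noteq> 0 \<longrightarrow> length e = n \<and> length v = n \<and> set v \<subseteq> {1..N})}"

text \<open>K_ij swaps z_i and z_j; P_ij swaps tensor factors i and j.\<close>
definition Kop :: "nat \<Rightarrow> nat \<Rightarrow> (int list \<times> nat list \<Rightarrow> complex) \<Rightarrow> (int list \<times> nat list \<Rightarrow> complex)" where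
  "Kop i j f = (\<lambda>(e, v). f (lswap i j e, v))"

definition Pop :: "nat \<Rightarrow> nat \<Rightarrow> (int list \<times> nat list \<Rightarrow> complex) \<Rightarrow> (int list \<times> nat list \<Rightarrow> complex)" where
  "Pop i j f = (\<lambda>(e, v). f (e, lswap i j v))"

definition F_space :: "nat \<Rightarrow> nat \<Rightarrow> (int list \<times> nat list \<Rightarrow> complex) set" where
  "F_space N n = {f \<in> tensor_space N n.
     \<forall>i j. i < n \<longrightarrow> j < n \<longrightarrow> i \<noteq> j \<longrightarrow> Kop i j f = (\<lambda>x. - Pop i j f x)}"

text \<open>underline k in {1..N} and overline k with k = underline k - N * overline k.\<close>
definition ul :: "nat \<Rightarrow> int \<Rightarrow> nat" where
  "ul N k = nat ((k - 1) mod int N + 1)"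

definition ol :: "nat \<Rightarrow> int \<Rightarrow> int" where
  "ol N k = - ((k - 1) div int N)"

definition uhat :: "nat \<Rightarrow> nat \<Rightarrow> int list \<Rightarrow> (int list \<times> nat list \<Rightarrow> complex)" where
  "uhat N n k = (\<lambda>x. \<Sum>w\<in>{w. w permutes {0..<n}}.
      of_int (sign w) * (if x = (map (\<lambda>i. ol N (k ! w i)) [0..<n], map (\<lambda>i. ul N (k ! w i)) [0..<n])
                         then 1 else 0))"

text \<open>ahat k = sum_w sign w x_{w(1)}^{k_1}...x_{w(n)}^{k_n}: the exponent of x_{w(i)} is k_i.\<close>
definition ahat :: "nat \<Rightarrow> int list \<Rightarrow> (int list \<Rightarrow> complex)" where
  "ahat n k = (\<lambda>e. \<Sum>w\<in>{w. w permutes {0..<n}}.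
      of_int (sign w) * (if e = map (\<lambda>i. k ! inv w i) [0..<n] then 1 else 0))"

definition mult_op :: "nat \<Rightarrow> (int list \<Rightarrow> complex) \<Rightarrow> (int list \<times> nat list \<Rightarrow> complex) \<Rightarrow> (int list \<times> nat list \<Rightarrow> complex)" where
  "mult_op n P f = (\<lambda>(e, v). if length e = n then
      (\<Sum>d\<in>{d. P d \<noteq> 0}. P d * f (map2 (-) e d, v)) else 0)"

text \<open>Multiplication of g by P(x_1^{-N},...,x_n^{-N}).\<close>
definition subst_mult :: "nat \<Rightarrow> nat \<Rightarrow> (int list \<Rightarrow> complex) \<Rightarrow> (int list \<Rightarrow> complex) \<Rightarrow> (int list \<Rightarrow> complex)" where
  "subst_mult N n P g = (\<lambda>e. if length e = n then
      (\<Sum>d\<in>{d. P d \<noteq> 0}. P d * g (map2 (\<lambda>a b. a + int N * b) e d)) else 0)"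

end

theory Submission
  imports Defs
begin

(* Writing k = ul k - N * ol k, the map k |-> z^(ol k) (x) v_(ul k) is a bijection from Z^n onto the
   monomial basis of C[z^(+-1)] (x) V^(x)n, and uhat k is the antisymmetrisation of the basis vector
   labelled k. So the explicit map sending f to the Laurent polynomial whose coefficient of x^kappa is
   the coefficient of f at the basis vector labelled kappa is linear on F_{N,n} and sends uhat k to
   ahat k; since an antisymmetric f is the combination of the uhat k (k strictly decreasing) with
   coefficients its own values at the labels k, this map is omega_*. Multiplying by z^d raises the
   exponents by d, i.e. lowers the labels by N d, which is multiplication by x^(-N d) on the other
   side. Symmetry of P is needed only to keep P f inside F_{N,n}. *)

lemma length_lswap [simp]: "length (lswap a b xs) = length xs"
  unfolding lswap_def by simp

lemma lswap_lswap: "a < length xs \<Longrightarrow> b < length xs \<Longrightarrow> lswap a b (lswap a b xs) = xs"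
  unfolding lswap_def by (auto intro!: nth_equalityI simp: nth_list_update)

lemma lswap_eq_iff:
  assumes "length xs = length ys" "a < length ys" "b < length ys"
  shows "xs = lswap a b ys \<longleftrightarrow> lswap a b xs = ys"
  using assms lswap_lswap[of a xs b] lswap_lswap[of a ys b] by metis

lemma map_lswap: "a < length xs \<Longrightarrow> b < length xs \<Longrightarrow> map g (lswap a b xs) = lswap a b (map g xs)"
  unfolding lswap_def by (simp add: map_update)

lemma lswap_eq_permute_list:
  "a < length xs \<Longrightarrow> b < length xs \<Longrightarrow> lswap a b xs = permute_list (transpose a b) xs"
  unfolding lswap_def permute_list_def by (auto intro!: nth_equalityI simp: nth_list_update transpose_def)

lemma sign_transpose_compose:
  assumes "permutation p" and "a \<noteq> b"
  shows "sign (transpose a b \<circ> p) = - sign p" and "sign (p \<circ> transpose a b) = - sign p"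
  using assms by (simp_all add: sign_compose permutation_swap_id sign_swap_id)

lemma sorted_desc_distinct: "sorted_wrt (>) (k :: 'a :: linorder list) \<Longrightarrow> distinct k"
  by (metis distinct_rev sorted_wrt_rev strict_sorted_iff)

lemma sorted_desc_eq:
  fixes k k' :: "'a :: linorder list"
  shows "sorted_wrt (>) k \<Longrightarrow> sorted_wrt (>) k' \<Longrightarrow> set k = set k' \<Longrightarrow> k = k'"
  by (metis rev_rev_ident set_rev sorted_wrt_rev strict_sorted_equal)

lemma distinct_eq_permute_sorted_desc:
  fixes \<kappa> :: "'a :: linorder list"
  assumes "distinct \<kappa>"
  obtains k w where "sorted_wrt (>) k" "length k = length \<kappa>" "w permutes {..<length \<kappa>}"
    "\<kappa> = permute_list w k"
proof -
  let ?k = "rev (sort \<kappa>)"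
  have "sorted_wrt (>) ?k" using assms by (simp add: sorted_wrt_rev strict_sorted_iff)
  moreover have "mset \<kappa> = mset ?k" by simp
  then obtain w where "w permutes {..<length ?k}" "permute_list w ?k = \<kappa>"
    by (rule mset_eq_permutation)
  ultimately show thesis using that[of ?k w] by simp
qed

lemma permute_list_inj:
  assumes "distinct k" and w: "w permutes {..<length k}" and w': "w' permutes {..<length k}"
    and eq: "permute_list w k = permute_list w' k"
  shows "w = w'"
proof
  fix i
  show "w i = w' i"
  proof (cases "i < length k")
    case True
    then have "k ! w i = k ! w' i"
      using eq w w' by (metis permute_list_nth)
    then show ?thesis
      using True assms(1) permutes_in_image[OF w] permutes_in_image[OF w'] by (simp add: nth_eq_iff_index_eq)
  next
    case False
    then show ?thesis using permutes_not_in[OF w] permutes_not_in[OF w'] by simp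
  qed
qed

lemma ul_ol_decompose: "N \<ge> 1 \<Longrightarrow> int (ul N k) - int N * ol N k = k"
  unfolding ul_def ol_def using div_mult_mod_eq[of "k - 1" "int N"] by (simp add: algebra_simps)

lemma ul_range: "N \<ge> 1 \<Longrightarrow> ul N k \<in> {1..N}"
proof -
  assume "N \<ge> 1"
  then have "0 \<le> (k - 1) mod int N" "(k - 1) mod int N < int N" by simp_all
  then show ?thesis unfolding ul_def by auto
qed

lemma ul_shift: "ul N (k + int N * d) = ul N k"
  unfolding ul_def by (metis add.commute add_diff_eq mod_mult_self2 mult.commute)

lemma ol_shift: "N \<ge> 1 \<Longrightarrow> ol N (k + int N * d) = ol N k - d"
proof -
  assume "N \<ge> 1"
  then have "((k - 1) + d * int N) div int N = (k - 1) div int N + d"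
    using div_mult_self1[of "int N" "k - 1" d] by simp
  moreover have "k + int N * d - 1 = (k - 1) + d * int N" by simp
  ultimately have "(k + int N * d - 1) div int N = (k - 1) div int N + d" by metis
  then show ?thesis unfolding ol_def by simp
qed

lemma ul_digit: "v \<in> {1..N} \<Longrightarrow> ul N (int v - int N * e) = v"
  using ul_shift[of N "int v" "- e"] by (simp add: ul_def mod_pos_pos_trivial)

lemma ol_digit: "v \<in> {1..N} \<Longrightarrow> ol N (int v - int N * e) = e"
  using ol_shift[of N "int v" "- e"] by (simp add: ol_def div_pos_pos_trivial)

definition tensor_monomial :: "nat \<Rightarrow> int list \<Rightarrow> int list \<times> nat list" where
  "tensor_monomial N k = (map (ol N) k, map (ul N) k)"

lemma tensor_monomial_eq_iff:
  assumes "N \<ge> 1"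
  shows "tensor_monomial N k = tensor_monomial N k' \<longleftrightarrow> k = k'"
proof -
  have "map2 (\<lambda>a b. int b - int N * a) (fst (tensor_monomial N k)) (snd (tensor_monomial N k)) = k" for k
    unfolding tensor_monomial_def by (simp add: map2_map_map ul_ol_decompose[OF assms])
  then show ?thesis by metis
qed

lemma tensor_monomial_range:
  assumes "N \<ge> 1" and "tensor_monomial N k = (e, v)"
  shows "length e = length k" "length v = length k" "set v \<subseteq> {1..N}"
  using assms ul_range unfolding tensor_monomial_def by auto

lemma tensor_monomial_cases:
  assumes "N \<ge> 1" and "length e = length v" and "set v \<subseteq> {1..N}"
  obtains \<kappa> where "length \<kappa> = length v" and "tensor_monomial N \<kappa> = (e, v)"
proof
  let ?\<kappa> = "map2 (\<lambda>a b. int b - int N * a) e v"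
  show "length ?\<kappa> = length v" using assms by simp
  show "tensor_monomial N ?\<kappa> = (e, v)"
    using assms unfolding tensor_monomial_def
    by (auto intro!: nth_equalityI simp: ul_digit ol_digit nth_mem subset_iff)
qed

lemma tensor_monomial_permute_list:
  "w permutes {..<length k} \<Longrightarrow>
     tensor_monomial N (permute_list w k) = map_prod (permute_list w) (permute_list w) (tensor_monomial N k)"
  unfolding tensor_monomial_def by (simp add: permute_list_map)

lemma tensor_monomial_transpose:
  assumes "a < length k" "b < length k"
  shows "tensor_monomial N (permute_list (transpose a b) k)
    = map_prod (lswap a b) (lswap a b) (tensor_monomial N k)"
proof -
  have "transpose a b permutes {..<length k}" using assms by (simp add: permutes_swap_id)
  then show ?thesis
    using assms
    by (simp add: tensor_monomial_permute_list tensor_monomial_def lswap_eq_permute_list[symmetric] map_lswap)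
qed

lemma tensor_space_zero:
  "f \<in> tensor_space N n \<Longrightarrow> \<not> (length e = n \<and> length v = n \<and> set v \<subseteq> {1..N}) \<Longrightarrow> f (e, v) = 0"
  unfolding tensor_space_def by blast

lemma F_space_swap:
  assumes f: "f \<in> F_space N n" and ab: "a < n" "b < n" "a \<noteq> b"
  shows "f (lswap a b e, lswap a b v) = - f (e, v)"
proof (cases "length v = n")
  case True
  have "Kop a b f = (\<lambda>x. - Pop a b f x)"
    using f ab unfolding F_space_def by blast
  then have "Kop a b f (e, lswap a b v) = - Pop a b f (e, lswap a b v)" by metis
  then show ?thesis using True ab by (simp add: Kop_def Pop_def lswap_lswap)
next
  case False
  have "f \<in> tensor_space N n" using f unfolding F_space_def by simp
  then show ?thesis
    using False tensor_space_zero[of f N n e v] tensor_space_zero[of f N n "lswap a b e" "lswap a b v"] by simp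
qed

lemma F_spaceI:
  assumes f: "f \<in> tensor_space N n"
    and swap: "\<And>a b e v. a < n \<Longrightarrow> b < n \<Longrightarrow> a \<noteq> b \<Longrightarrow> length e = n \<Longrightarrow> length v = n \<Longrightarrow>
       f (lswap a b e, lswap a b v) = - f (e, v)"
  shows "f \<in> F_space N n"
  unfolding F_space_def
proof (intro CollectI conjI allI impI f ext)
  fix a b :: nat and x :: "int list \<times> nat list"
  assume ab: "a < n" "b < n" "a \<noteq> b"
  obtain e v where x: "x = (e, v)" by fastforce
  show "Kop a b f x = - Pop a b f x"
  proof (cases "length e = n \<and> length v = n")
    case True
    then have "f (lswap a b e, v) = - f (e, lswap a b v)"
      using swap[OF ab, of e "lswap a b v"] ab by (simp add: lswap_lswap)
    then show ?thesis unfolding x Kop_def Pop_def by simp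
  next
    case False
    then show ?thesis unfolding x Kop_def Pop_def
      using tensor_space_zero[OF f, of "lswap a b e" v] tensor_space_zero[OF f, of e "lswap a b v"] by auto
  qed
qed

lemma F_space_monomial_transpose:
  assumes f: "f \<in> F_space N n" and "length k = n" and ab: "a < n" "b < n" "a \<noteq> b"
  shows "f (tensor_monomial N (permute_list (transpose a b) k)) = - f (tensor_monomial N k)"
  using F_space_swap[OF f ab] assms(2) ab
  by (cases "tensor_monomial N k") (simp add: tensor_monomial_transpose)

lemma F_space_monomial_permute:
  assumes f: "f \<in> F_space N n" and w: "w permutes {..<n}" and k: "length k = n"
  shows "f (tensor_monomial N (permute_list w k)) = of_int (sign w) * f (tensor_monomial N k)"
  using w finite_lessThan[of n] k
proof (induction w arbitrary: k rule: permutes_induct)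
  case id
  then show ?case by (simp add: sign_id)
next
  case (swap a b p)
  let ?t = "transpose a b"
  have "permute_list (?t \<circ> p) k = permute_list p (permute_list ?t k)"
    using swap.hyps(4) swap.prems by (simp add: permute_list_compose)
  then have "f (tensor_monomial N (permute_list (?t \<circ> p) k))
      = of_int (sign p) * f (tensor_monomial N (permute_list ?t k))"
    using swap.IH swap.prems by simp
  also have "\<dots> = - of_int (sign p) * f (tensor_monomial N k)"
    using F_space_monomial_transpose[OF f swap.prems] swap.hyps(1-3) by simp
  finally have "f (tensor_monomial N (permute_list (?t \<circ> p) k))
      = - of_int (sign p) * f (tensor_monomial N k)" .
  moreover have "sign (?t \<circ> p) = - sign p"
    using sign_transpose_compose(1)[OF permutes_imp_permutation[OF _ swap.hyps(4)] swap.hyps(3)] by simp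
  ultimately show ?case by (simp add: comp_def)
qed

lemma F_space_monomial_not_distinct:
  assumes g: "g \<in> F_space N n" and "length \<kappa> = n" and "\<not> distinct \<kappa>"
  shows "g (tensor_monomial N \<kappa>) = 0"
proof -
  obtain i j where ij: "i < n" "j < n" "i \<noteq> j" "\<kappa> ! i = \<kappa> ! j"
    using assms by (auto simp: distinct_conv_nth)
  then have "permute_list (transpose i j) \<kappa> = \<kappa>"
    using assms(2) by (auto intro!: nth_equalityI simp: permute_list_nth permutes_swap_id transpose_def)
  then have "g (tensor_monomial N \<kappa>) = - g (tensor_monomial N \<kappa>)"
    using F_space_monomial_transpose[OF g assms(2) ij(1-3)] by simp
  then show ?thesis by simp
qed

lemma F_space_lincomb:
  assumes g: "g \<in> F_space N n" and h: "h \<in> F_space N n"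
  shows "(\<lambda>x. a * g x + b * h x) \<in> F_space N n"
proof (rule F_spaceI)
  have gt: "g \<in> tensor_space N n" and ht: "h \<in> tensor_space N n"
    using g h unfolding F_space_def by auto
  show "(\<lambda>x. a * g x + b * h x) \<in> tensor_space N n"
    unfolding tensor_space_def
  proof (intro CollectI conjI allI impI)
    have "{x. a * g x + b * h x \<noteq> 0} \<subseteq> {x. g x \<noteq> 0} \<union> {x. h x \<noteq> 0}" by auto
    then show "finite {x. a * g x + b * h x \<noteq> 0}"
      using gt ht unfolding tensor_space_def by (auto intro: finite_subset)
    fix e v assume "a * g (e, v) + b * h (e, v) \<noteq> 0"
    then have "g (e, v) \<noteq> 0 \<or> h (e, v) \<noteq> 0" by auto
    then show "length e = n" "length v = n" "set v \<subseteq> {1..N}"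
      using gt ht unfolding tensor_space_def by blast+
  qed
  show "a * g (lswap i j e, lswap i j v) + b * h (lswap i j e, lswap i j v) = - (a * g (e, v) + b * h (e, v))"
    if "i < n" "j < n" "i \<noteq> j" for i j e v
    using F_space_swap[OF g that] F_space_swap[OF h that] by (simp add: algebra_simps)
qed

lemma F_space_zero: "(\<lambda>x. 0) \<in> F_space N n"
  unfolding F_space_def tensor_space_def Kop_def Pop_def by (auto simp: fun_eq_iff)

lemma F_space_sum:
  "finite S \<Longrightarrow> (\<And>k. k \<in> S \<Longrightarrow> h k \<in> F_space N n) \<Longrightarrow> (\<lambda>x. \<Sum>k\<in>S. c k * h k x) \<in> F_space N n"
proof (induction S rule: finite_induct)
  case empty
  then show ?case using F_space_zero by simp
next
  case (insert k S)
  then show ?case using F_space_lincomb[of "h k" N n "\<lambda>x. \<Sum>k\<in>S. c k * h k x" "c k" 1] by simp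
qed

definition F_linear :: "nat \<Rightarrow> nat \<Rightarrow> ((int list \<times> nat list \<Rightarrow> complex) \<Rightarrow> 'a \<Rightarrow> complex) \<Rightarrow> bool" where
  "F_linear N n \<Phi> \<longleftrightarrow> (\<forall>g h a b. g \<in> F_space N n \<longrightarrow> h \<in> F_space N n \<longrightarrow>
     \<Phi> (\<lambda>x. a * g x + b * h x) = (\<lambda>y. a * \<Phi> g y + b * \<Phi> h y))"

lemma F_linearD:
  "F_linear N n \<Phi> \<Longrightarrow> g \<in> F_space N n \<Longrightarrow> h \<in> F_space N n \<Longrightarrow>
     \<Phi> (\<lambda>x. a * g x + b * h x) = (\<lambda>y. a * \<Phi> g y + b * \<Phi> h y)"
  unfolding F_linear_def by blast

lemma F_linear_sum:
  assumes \<Phi>: "F_linear N n \<Phi>"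
  shows "finite S \<Longrightarrow> (\<And>k. k \<in> S \<Longrightarrow> h k \<in> F_space N n) \<Longrightarrow>
    \<Phi> (\<lambda>x. \<Sum>k\<in>S. c k * h k x) = (\<lambda>y. \<Sum>k\<in>S. c k * \<Phi> (h k) y)"
proof (induction S rule: finite_induct)
  case empty
  show ?case using F_linearD[OF \<Phi> F_space_zero F_space_zero, of 0 0] by simp
next
  case (insert k S)
  have "\<Phi> (\<lambda>x. c k * h k x + 1 * (\<Sum>k\<in>S. c k * h k x))
      = (\<lambda>y. c k * \<Phi> (h k) y + 1 * \<Phi> (\<lambda>x. \<Sum>k\<in>S. c k * h k x) y)"
    using insert.prems by (intro F_linearD[OF \<Phi>] F_space_sum[OF insert.hyps(1)]) auto
  then show ?case using insert by simp
qed

lemma uhat_eq: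
  "length k = n \<Longrightarrow> uhat N n k x = (\<Sum>w | w permutes {..<n}.
     of_int (sign w) * (if x = tensor_monomial N (permute_list w k) then 1 else 0))"
  unfolding uhat_def tensor_monomial_def permute_list_def by (simp add: atLeast0LessThan comp_def)

lemma ahat_eq:
  "length k = n \<Longrightarrow> ahat n k \<kappa> = (\<Sum>w | w permutes {..<n}.
     of_int (sign w) * (if \<kappa> = permute_list w k then 1 else 0))"
proof -
  assume k: "length k = n"
  let ?a = "\<lambda>w. of_int (sign w) * (if \<kappa> = permute_list w k then 1 else 0) :: complex"
  have "ahat n k \<kappa> = (\<Sum>w | w permutes {..<n}. ?a (inv w))"
    unfolding ahat_def permute_list_def using k
    by (intro sum.cong) (auto simp: atLeast0LessThan sign_inverse[OF permutes_imp_permutation[OF finite_lessThan]])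
  also have "\<dots> = (\<Sum>w | w permutes {..<n}. ?a w)"
    by (rule sum_permutations_inverse[symmetric])
  finally show ?thesis .
qed

lemma uhat_monomial:
  "N \<ge> 1 \<Longrightarrow> length k = n \<Longrightarrow> uhat N n k (tensor_monomial N \<kappa>) = ahat n k \<kappa>"
  by (simp add: uhat_eq ahat_eq tensor_monomial_eq_iff)

lemma uhat_in_F_space:
  assumes N: "N \<ge> 1" and k: "length k = n"
  shows "uhat N n k \<in> F_space N n"
proof (rule F_spaceI)
  let ?W = "{w. w permutes {..<n}}"
  have "uhat N n k x = 0" if "x \<notin> (\<lambda>w. tensor_monomial N (permute_list w k)) ` ?W" for x
    unfolding uhat_eq[OF k] using that by (intro sum.neutral ballI) (simp add: image_iff)
  then have supp: "{x. uhat N n k x \<noteq> 0} \<subseteq> (\<lambda>w. tensor_monomial N (permute_list w k)) ` ?W"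
    by blast
  show "uhat N n k \<in> tensor_space N n"
    unfolding tensor_space_def
  proof (intro CollectI conjI allI impI)
    show "finite {x. uhat N n k x \<noteq> 0}"
      using supp by (rule finite_subset) (simp add: finite_permutations)
    fix e v assume "uhat N n k (e, v) \<noteq> 0"
    then obtain w where "tensor_monomial N (permute_list w k) = (e, v)" using supp by force
    from tensor_monomial_range[OF N this] k
    show "length e = n" "length v = n" "set v \<subseteq> {1..N}" by simp_all
  qed
  fix a b :: nat and e :: "int list" and v :: "nat list"
  assume ab: "a < n" "b < n" "a \<noteq> b" and ev: "length e = n" "length v = n"
  let ?t = "transpose a b"
  have t: "?t permutes {..<n}" using ab by (simp add: permutes_swap_id)
  have swap_eq: "(e, v) = tensor_monomial N (permute_list (w \<circ> ?t) k)
      \<longleftrightarrow> (lswap a b e, lswap a b v) = tensor_monomial N (permute_list w k)" for w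
  proof -
    have "tensor_monomial N (permute_list (w \<circ> ?t) k)
        = map_prod (lswap a b) (lswap a b) (tensor_monomial N (permute_list w k))"
      using t k ab by (simp add: permute_list_compose tensor_monomial_transpose)
    moreover obtain e' v' where ev': "tensor_monomial N (permute_list w k) = (e', v')" by fastforce
    moreover have "length e' = n" "length v' = n" using tensor_monomial_range[OF N ev'] k by simp_all
    ultimately show ?thesis using ab ev by (simp add: lswap_eq_iff)
  qed
  let ?G = "\<lambda>w. of_int (sign w) * (if (e, v) = tensor_monomial N (permute_list w k) then 1 else 0) :: complex"
  have "uhat N n k (e, v) = sum ?G ?W" using k by (simp add: uhat_eq)
  also have "\<dots> = (\<Sum>w\<in>?W. ?G (w \<circ> ?t))" by (rule sum_permutations_compose_right[OF t])
  also have "\<dots> = (\<Sum>w\<in>?W. - (of_int (sign w) *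
      (if (lswap a b e, lswap a b v) = tensor_monomial N (permute_list w k) then 1 else 0)))"
  proof (rule sum.cong[OF refl])
    fix w assume "w \<in> ?W"
    then have "permutation w" using permutes_imp_permutation[OF finite_lessThan] by blast
    then have "sign (w \<circ> ?t) = - sign w" using ab(3) by (rule sign_transpose_compose(2))
    then show "?G (w \<circ> ?t) = - (of_int (sign w) *
        (if (lswap a b e, lswap a b v) = tensor_monomial N (permute_list w k) then 1 else 0))"
      by (simp add: swap_eq)
  qed
  also have "\<dots> = - uhat N n k (lswap a b e, lswap a b v)"
    using k by (simp add: uhat_eq sum_negf)
  finally show "uhat N n k (lswap a b e, lswap a b v) = - uhat N n k (e, v)" by simp
qed

lemma ahat_not_distinct:
  "distinct k \<Longrightarrow> length k = n \<Longrightarrow> \<not> distinct \<kappa> \<Longrightarrow> ahat n k \<kappa> = 0"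
  by (auto simp: ahat_eq intro!: sum.neutral)

lemma ahat_permute_list:
  assumes k: "sorted_wrt (>) k" "length k = n" and k': "sorted_wrt (>) k'" "length k' = n"
    and w0: "w0 permutes {..<n}"
  shows "ahat n k' (permute_list w0 k) = (if k' = k then of_int (sign w0) else 0)"
proof (cases "k' = k")
  case True
  have "permute_list w0 k = permute_list w k \<longleftrightarrow> w = w0" if "w permutes {..<n}" for w
    using permute_list_inj[OF sorted_desc_distinct[OF k(1)]] w0 that k(2) by auto
  then have "ahat n k' (permute_list w0 k) = (\<Sum>w | w permutes {..<n}. if w = w0 then of_int (sign w) else 0)"
    using True k by (auto simp: ahat_eq intro!: sum.cong)
  also have "\<dots> = of_int (sign w0)" using w0 by (simp add: finite_permutations)
  finally show ?thesis using True by simp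
next
  case False
  have "permute_list w0 k \<noteq> permute_list w k'" if "w permutes {..<n}" for w
    using sorted_desc_eq[OF k(1) k'(1)] False w0 that k k' by (metis set_permute_list)
  then show ?thesis using False k' by (auto simp: ahat_eq intro!: sum.neutral)
qed

lemma F_space_expansion:
  assumes N: "N \<ge> 1" and g: "g \<in> F_space N n"
  defines "S \<equiv> {k. length k = n \<and> sorted_wrt (>) k \<and> g (tensor_monomial N k) \<noteq> 0}"
  shows "finite S" and "g = (\<lambda>x. \<Sum>k\<in>S. g (tensor_monomial N k) * uhat N n k x)"
proof -
  have gt: "g \<in> tensor_space N n" using g unfolding F_space_def by simp
  have "S \<subseteq> tensor_monomial N -` {x. g x \<noteq> 0}" unfolding S_def by auto
  moreover have "finite (tensor_monomial N -` {x. g x \<noteq> 0})"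
    using gt by (intro finite_vimageI) (auto simp: tensor_space_def inj_def tensor_monomial_eq_iff[OF N])
  ultimately show finS: "finite S" by (rule finite_subset)
  show "g = (\<lambda>x. \<Sum>k\<in>S. g (tensor_monomial N k) * uhat N n k x)"
  proof
    fix x :: "int list \<times> nat list"
    obtain e v where x: "x = (e, v)" by fastforce
    show "g x = (\<Sum>k\<in>S. g (tensor_monomial N k) * uhat N n k x)"
    proof (cases "length e = n \<and> length v = n \<and> set v \<subseteq> {1..N}")
      case False
      have "uhat N n k x = 0" if "k \<in> S" for k
        using that uhat_in_F_space[OF N, of k n] tensor_space_zero[OF _ False]
        unfolding S_def F_space_def x by simp
      then show ?thesis using tensor_space_zero[OF gt False] x by simp
    next
      case True
      then obtain \<kappa> where \<kappa>: "length \<kappa> = n" "x = tensor_monomial N \<kappa>"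
        using tensor_monomial_cases[OF N, of e v] x by metis
      have uhat_\<kappa>: "uhat N n k x = ahat n k \<kappa>" if "k \<in> S" for k
        using that \<kappa>(2) uhat_monomial[OF N] unfolding S_def by simp
      show ?thesis
      proof (cases "distinct \<kappa>")
        case False
        have "uhat N n k x = 0" if k: "k \<in> S" for k
        proof -
          have "sorted_wrt (>) k" "length k = n" using k unfolding S_def by auto
          then show ?thesis using uhat_\<kappa>[OF k] ahat_not_distinct[OF sorted_desc_distinct _ False] by simp
        qed
        then show ?thesis using F_space_monomial_not_distinct[OF g \<kappa>(1) False] \<kappa>(2) by simp
      next
        case True
        then obtain k0 w0 where k0: "sorted_wrt (>) k0" "length k0 = n" and w0: "w0 permutes {..<n}"
          and \<kappa>_eq: "\<kappa> = permute_list w0 k0"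
          using \<kappa>(1) by (metis distinct_eq_permute_sorted_desc)
        have "(\<Sum>k\<in>S. g (tensor_monomial N k) * uhat N n k x)
            = (\<Sum>k\<in>S. if k = k0 then g (tensor_monomial N k0) * of_int (sign w0) else 0)"
          using uhat_\<kappa> ahat_permute_list[OF k0 _ _ w0] \<kappa>_eq unfolding S_def by (intro sum.cong) auto
        also have "\<dots> = of_int (sign w0) * g (tensor_monomial N k0)"
          using finS k0 unfolding S_def by auto
        also have "\<dots> = g x"
          using F_space_monomial_permute[OF g w0 k0(2)] \<kappa> \<kappa>_eq by simp
        finally show ?thesis by simp
      qed
    qed
  qed
qed

definition omega_explicit :: "nat \<Rightarrow> nat \<Rightarrow> (int list \<times> nat list \<Rightarrow> complex) \<Rightarrow> int list \<Rightarrow> complex" where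
  "omega_explicit N n g = (\<lambda>\<kappa>. if length \<kappa> = n then g (tensor_monomial N \<kappa>) else 0)"

lemma F_linear_omega_explicit: "F_linear N n (omega_explicit N n)"
  unfolding F_linear_def omega_explicit_def by auto

lemma omega_explicit_uhat:
  "N \<ge> 1 \<Longrightarrow> length k = n \<Longrightarrow> omega_explicit N n (uhat N n k) = ahat n k"
  by (auto simp: fun_eq_iff omega_explicit_def uhat_monomial ahat_eq intro!: sum.neutral)

lemma F_linear_eq_on_F_space:
  assumes N: "N \<ge> 1" and \<Phi>: "F_linear N n \<Phi>" and \<Psi>: "F_linear N n \<Psi>"
    and basis: "\<And>k. length k = n \<Longrightarrow> sorted_wrt (>) k \<Longrightarrow> \<Phi> (uhat N n k) = \<Psi> (uhat N n k)"
    and g: "g \<in> F_space N n"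
  shows "\<Phi> g = \<Psi> g"
proof -
  let ?S = "{k. length k = n \<and> sorted_wrt (>) k \<and> g (tensor_monomial N k) \<noteq> 0}"
  let ?c = "\<lambda>k. g (tensor_monomial N k)"
  have uhat_F: "\<And>k. k \<in> ?S \<Longrightarrow> uhat N n k \<in> F_space N n" using uhat_in_F_space[OF N] by auto
  note expansion = F_space_expansion[OF N g]
  have "\<Phi> g = (\<lambda>y. \<Sum>k\<in>?S. ?c k * \<Phi> (uhat N n k) y)"
    by (subst expansion(2)) (rule F_linear_sum[OF \<Phi> expansion(1) uhat_F])
  also have "\<dots> = (\<lambda>y. \<Sum>k\<in>?S. ?c k * \<Psi> (uhat N n k) y)" using basis by simp
  also have "\<dots> = \<Psi> g"
    by (subst (2) expansion(2)) (rule F_linear_sum[OF \<Psi> expansion(1) uhat_F, symmetric])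
  finally show ?thesis .
qed

lemma mult_op_in_tensor_space:
  assumes P: "P \<in> laurent n" and f: "f \<in> tensor_space N n"
  shows "mult_op n P f \<in> tensor_space N n"
proof -
  let ?D = "{d. P d \<noteq> 0}"
  have finD: "finite ?D" and lenD: "\<And>d. d \<in> ?D \<Longrightarrow> length d = n"
    using P unfolding laurent_def by auto
  have shifted: "\<exists>d\<in>?D. f (map2 (-) e d, v) \<noteq> 0 \<and> length e = n" if "mult_op n P f (e, v) \<noteq> 0" for e v
    using that unfolding mult_op_def
    by (auto split: if_splits elim!: sum.not_neutral_contains_not_neutral)
  let ?shift = "\<lambda>(x, d). (map2 (+) (fst x) d, snd x)"
  have "{x. mult_op n P f x \<noteq> 0} \<subseteq> ?shift ` ({x. f x \<noteq> 0} \<times> ?D)"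
  proof
    fix x assume x_supp: "x \<in> {x. mult_op n P f x \<noteq> 0}"
    obtain e v where x: "x = (e, v)" by fastforce
    obtain d where d: "d \<in> ?D" "f (map2 (-) e d, v) \<noteq> 0" "length e = n"
      using shifted[of e v] x_supp x by blast
    then have "e = map2 (+) (map2 (-) e d) d" using lenD[OF d(1)] by (auto intro!: nth_equalityI)
    then have "x = ?shift ((map2 (-) e d, v), d)" using x by simp
    then show "x \<in> ?shift ` ({x. f x \<noteq> 0} \<times> ?D)" using d by blast
  qed
  moreover have "finite {x. f x \<noteq> 0}" using f unfolding tensor_space_def by simp
  ultimately have "finite {x. mult_op n P f x \<noteq> 0}"
    using finD by (meson finite_SigmaI finite_imageI finite_subset)
  moreover have "length e = n \<and> length v = n \<and> set v \<subseteq> {1..N}" if "mult_op n P f (e, v) \<noteq> 0" for e v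
    using shifted[OF that] f unfolding tensor_space_def by blast
  ultimately show ?thesis unfolding tensor_space_def by blast
qed

lemma mult_op_in_F_space:
  assumes P: "symmetric_laurent n P" and f: "f \<in> F_space N n"
  shows "mult_op n P f \<in> F_space N n"
proof (rule F_spaceI)
  let ?D = "{d. P d \<noteq> 0}"
  have lenD: "\<And>d. d \<in> ?D \<Longrightarrow> length d = n"
    and P_swap: "\<And>a b d. a < n \<Longrightarrow> b < n \<Longrightarrow> P (lswap a b d) = P d"
    using P unfolding symmetric_laurent_def laurent_def by auto
  show "mult_op n P f \<in> tensor_space N n"
    using P f mult_op_in_tensor_space unfolding symmetric_laurent_def F_space_def by blast
  fix a b :: nat and e :: "int list" and v :: "nat list"
  assume ab: "a < n" "b < n" "a \<noteq> b" and ev: "length e = n" "length v = n"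
  let ?G = "\<lambda>d. P d * f (map2 (-) (lswap a b e) d, lswap a b v)"
  have "mult_op n P f (lswap a b e, lswap a b v) = sum ?G ?D"
    unfolding mult_op_def using ev by simp
  also have "\<dots> = (\<Sum>d\<in>?D. ?G (lswap a b d))"
    by (rule sum.reindex_bij_witness[where i="lswap a b" and j="lswap a b"])
      (use lenD P_swap ab in \<open>auto simp: lswap_lswap\<close>)
  also have "\<dots> = (\<Sum>d\<in>?D. - (P d * f (map2 (-) e d, v)))"
  proof (rule sum.cong[OF refl])
    fix d assume d: "d \<in> ?D"
    have "map2 (-) (lswap a b e) (lswap a b d) = lswap a b (map2 (-) e d)"
      using lenD[OF d] ev ab by (auto intro!: nth_equalityI simp: lswap_def nth_list_update)
    then show "?G (lswap a b d) = - (P d * f (map2 (-) e d, v))"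
      using P_swap[OF ab(1,2)] F_space_swap[OF f ab] by simp
  qed
  also have "\<dots> = - mult_op n P f (e, v)"
    unfolding mult_op_def using ev by (simp add: sum_negf)
  finally show "mult_op n P f (lswap a b e, lswap a b v) = - mult_op n P f (e, v)" .
qed

lemma omega_explicit_mult_op:
  assumes N: "N \<ge> 1" and P: "P \<in> laurent n"
  shows "omega_explicit N n (mult_op n P f) = subst_mult N n P (omega_explicit N n f)"
proof
  fix \<kappa> :: "int list"
  show "omega_explicit N n (mult_op n P f) \<kappa> = subst_mult N n P (omega_explicit N n f) \<kappa>"
  proof (cases "length \<kappa> = n")
    case True
    have "tensor_monomial N (map2 (\<lambda>a b. a + int N * b) \<kappa> d)
        = (map2 (-) (fst (tensor_monomial N \<kappa>)) d, snd (tensor_monomial N \<kappa>))"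
      if "P d \<noteq> 0" for d
      using that P True unfolding laurent_def tensor_monomial_def
      by (auto intro!: nth_equalityI simp: ol_shift[OF N] ul_shift)
    then show ?thesis
      using True P unfolding omega_explicit_def mult_op_def subst_mult_def laurent_def
      by (auto simp: tensor_monomial_def intro!: sum.cong)
  next
    case False
    then show ?thesis unfolding omega_explicit_def subst_mult_def by simp
  qed
qed

theorem lemma3:
  fixes N n :: nat
    and P :: "int list \<Rightarrow> complex"
    and \<omega> :: "(int list \<times> nat list \<Rightarrow> complex) \<Rightarrow> (int list \<Rightarrow> complex)"
    and f :: "int list \<times> nat list \<Rightarrow> complex"
  assumes "N \<ge> 1" and "n \<ge> 1"
    and "symmetric_laurent n P"
    and \<omega>_linear: "\<And>g h a b. g \<in> F_space N n \<Longrightarrow> h \<in> F_space N n \<Longrightarrow>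
           \<omega> (\<lambda>x. a * g x + b * h x) = (\<lambda>e. a * \<omega> g e + b * \<omega> h e)"
    and \<omega>_basis: "\<And>k. length k = n \<Longrightarrow> sorted_wrt (>) k \<Longrightarrow> \<omega> (uhat N n k) = ahat n k"
    and "f \<in> F_space N n"
  shows "\<omega> (mult_op n P f) = subst_mult N n P (\<omega> f)"
proof -
  note N = assms(1) and P = assms(3) and f = assms(6)
  have "F_linear N n \<omega>" unfolding F_linear_def using \<omega>_linear by blast
  then have \<omega>_explicit: "\<omega> g = omega_explicit N n g" if "g \<in> F_space N n" for g
    using F_linear_eq_on_F_space[OF N _ F_linear_omega_explicit _ that] \<omega>_basis omega_explicit_uhat[OF N]
    by simp
  have "\<omega> (mult_op n P f) = omega_explicit N n (mult_op n P f)"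
    using \<omega>_explicit mult_op_in_F_space[OF P f] by simp
  also have "\<dots> = subst_mult N n P (omega_explicit N n f)"
    using omega_explicit_mult_op[OF N] P unfolding symmetric_laurent_def by simp
  also have "\<dots> = subst_mult N n P (\<omega> f)" using \<omega>_explicit f by simp
  finally show ?thesis .
qed

end
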